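(* Let $T\in(0,\infty)$, $c\in[2,\infty)$ and $f\in C(\mathbb{R},\mathbb{R})$. For every $d\in\mathbb{N}$ let $\beta^d\in C(\mathbb{R}^d,\mathbb{R}^d)$, $\sigma^d\in C(\mathbb{R}^d,\mathbb{R}^{d\times d})$, $\gamma^d\in C(\mathbb{R}^{2d},\mathbb{R}^d)$, $g^d\in C(\mathbb{R}^d,\mathbb{R})$, and let $\nu^d$ be a Lévy measure on $\mathcal{B}(\mathbb{R}^d\setminus\{0\})$. Assume: (A1) for every $d$ there is $C_d\in(0,\infty)$ with $\|\gamma^d(x,z)\|^2\le C_d(1\wedge\|z\|^2)$ and $\|\gamma^d(x,z)-\gamma^d(y,z)\|^2\le C_d\|x-y\|^2(1\wedge\|z\|^2)$ for all $x,y,z\in\mathbb{R}^d$; (A2) for all $d$, $x,z$ the Jacobian $(D_x\gamma^d)(x,z)$ exists and there is $\lambda_d\in(0,\infty)$ with $\lambda_d\le|\det(I_d+\delta(D_x\gamma^d)(x,z))|$ for all $x,z\in\mathbb{R}^d$, $\delta\in[0,1]$; (A3) for all $d\in\mathbb{N}$, $x,y\in\mathbb{R}^d$, $w_1,w_2\in\mathbb{R}$: $\|\beta^d(x)-\beta^d(y)\|^2+\|\sigma^d(x)-\sigma^d(y)\|_F^2+\int_{\mathbb{R}^d\setminus\{0\}}\|\gamma^d(x,z)-\gamma^d(y,z)\|^2\nu^d(dz)\le c\|x-y\|^2$, $|f(w_1)-f(w_2)|^2\le c|w_1-w_2|^2$, $|g^d(x)-g^d(y)|^2\le cd^cT^{-1}\|x-y\|^2$,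 and $\|\beta^d(0)\|^2+\|\sigma^d(0)\|_F^2+\int_{\mathbb{R}^d\setminus\{0\}}\|\gamma^d(0,z)\|^2\nu^d(dz)+T^3(|f(0)|+1)^2+T|g^d(0)|^2\le cd^c$. Let $b=64\big(1+|c^{1/2}(4c^{1/2}+2c^{1/2}T^{-3/2})|^{1/2}\big)$. Then there exist, for every $\varepsilon\in(0,1)$, $f_\varepsilon\in C(\mathbb{R},\mathbb{R})$ and $\Phi_{f_\varepsilon}\in\mathbf{N}$ such that for all $d\in\mathbb{N}$, $\varepsilon\in(0,1)$, $w_1,w_2\in\mathbb{R}$: $\mathcal{R}(\Phi_{f_\varepsilon})=f_\varepsilon$, $\dim(\mathcal{D}(\Phi_{f_\varepsilon}))=3\le\frac{bd^c\varepsilon^{-c}}{4}$, $|||\mathcal{D}(\Phi_{f_\varepsilon})|||\le\frac{b\varepsilon^{-2}}{4}$, $|f_\varepsilon(w_1)-f_\varepsilon(w_2)|^2\le c|w_1-w_2|^2$, $|f(w_1)-f_\varepsilon(w_1)|^2\le\varepsilon(1+|w_1|^4)$, and $T^3|f_\varepsilon(0)|\le cd^c$.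
   Context: $\|\cdot\|$ Euclidean norm, $\|\cdot\|_F$ Frobenius norm; for $x=(x_1,\dots,x_k)$, $|||x|||=\max_i|x_i|$ and $\dim(x)=k$. Deep neural networks: $\mathbf{A}_k\colon\mathbb{R}^k\to\mathbb{R}^k$ is the componentwise ReLU; $\mathbf{N}=\bigcup_{H\in\mathbb{N}}\bigcup_{(k_0,\dots,k_{H+1})\in\mathbb{N}^{H+2}}\prod_{n=1}^{H+1}(\mathbb{R}^{k_n\times k_{n-1}}\times\mathbb{R}^{k_n})$. For $\Phi=((W_1,B_1),\dots,(W_{H+1},B_{H+1}))$ with $W_n\in\mathbb{R}^{k_n\times k_{n-1}}$, $B_n\in\mathbb{R}^{k_n}$: $\mathcal{D}(\Phi)=(k_0,\dots,k_{H+1})$ and $\mathcal{R}(\Phi)\in C(\mathbb{R}^{k_0},\mathbb{R}^{k_{H+1}})$, $(\mathcal{R}(\Phi))(x_0)=W_{H+1}x_H+B_{H+1}$ with $x_n=\mathbf{A}_{k_n}(W_nx_{n-1}+B_n)$, $n=1,\dots,H$. *)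

theory Defs
  imports "HOL-Analysis.Analysis" "HOL-Combinatorics.Permutations"
begin

text \<open>R^d is the set of real sequences vanishing from index d on; the
product topology on nat => real restricted to it is the Euclidean topology.\<close>

definition Rd :: "nat \<Rightarrow> (nat \<Rightarrow> real) set" where
  "Rd d = {x. \<forall>i\<ge>d. x i = 0}"

definition Rmat :: "nat \<Rightarrow> (nat \<Rightarrow> nat \<Rightarrow> real) set" where
  "Rmat d = {A. \<forall>i j. (d \<le> i \<or> d \<le> j) \<longrightarrow> A i j = 0}"

definition vzero :: "nat \<Rightarrow> real" where
  "vzero = (\<lambda>_. 0)"

definition vdiff :: "(nat \<Rightarrow> real) \<Rightarrow> (nat \<Rightarrow> real) \<Rightarrow> (nat \<Rightarrow> real)" where
  "vdiff x y = (\<lambda>i. x i - y i)"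

definition mdiff :: "(nat \<Rightarrow> nat \<Rightarrow> real) \<Rightarrow> (nat \<Rightarrow> nat \<Rightarrow> real) \<Rightarrow> (nat \<Rightarrow> nat \<Rightarrow> real)" where
  "mdiff A B = (\<lambda>i j. A i j - B i j)"

definition vnorm :: "nat \<Rightarrow> (nat \<Rightarrow> real) \<Rightarrow> real" where
  "vnorm d x = sqrt (\<Sum>i<d. (x i)\<^sup>2)"

definition fnorm :: "nat \<Rightarrow> (nat \<Rightarrow> nat \<Rightarrow> real) \<Rightarrow> real" where
  "fnorm d A = sqrt (\<Sum>i<d. \<Sum>j<d. (A i j)\<^sup>2)"

definition mdet :: "nat \<Rightarrow> (nat \<Rightarrow> nat \<Rightarrow> real) \<Rightarrow> real" where
  "mdet d A = (\<Sum>p | p permutes {..<d}. of_int (sign p) * (\<Prod>i<d. A i (p i)))"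

definition has_jacobian :: "nat \<Rightarrow> ((nat \<Rightarrow> real) \<Rightarrow> (nat \<Rightarrow> real)) \<Rightarrow> (nat \<Rightarrow> real)
    \<Rightarrow> (nat \<Rightarrow> nat \<Rightarrow> real) \<Rightarrow> bool" where
  "has_jacobian d F x J \<longleftrightarrow> J \<in> Rmat d \<and>
     ((\<lambda>h. vnorm d (\<lambda>i. F (\<lambda>k. x k + h k) i - F x i - (\<Sum>j<d. J i j * h j)) / vnorm d h)
        \<longlongrightarrow> 0) (at vzero within Rd d)"

definition levy_measure :: "nat \<Rightarrow> (nat \<Rightarrow> real) measure \<Rightarrow> bool" where
  "levy_measure d \<nu> \<longleftrightarrow>
     sets \<nu> = sets (restrict_space borel (Rd d - {vzero})) \<and>
     (\<integral>\<^sup>+ z. ennreal (min 1 ((vnorm d z)\<^sup>2)) \<partial>\<nu>) < \<infinity>"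

text \<open>A network is a pair (ks, Ls): ks = (k_0,...,k_{H+1}) and
Ls = ((W_1,B_1),...,(W_{H+1},B_{H+1})), matrices/vectors stored as functions
vanishing outside their index ranges.\<close>

type_synonym nnet = "nat list \<times> ((nat \<Rightarrow> nat \<Rightarrow> real) \<times> (nat \<Rightarrow> real)) list"

definition nn_valid :: "nnet \<Rightarrow> bool" where
  "nn_valid \<Phi> \<longleftrightarrow> (let ks = fst \<Phi>; Ls = snd \<Phi> in
     length Ls \<ge> 1 \<and> length ks = length Ls + 1 \<and> (\<forall>k\<in>set ks. 0 < k) \<and>
     (\<forall>n<length Ls.
        (\<forall>i j. (ks ! (n+1) \<le> i \<or> ks ! n \<le> j) \<longrightarrow> fst (Ls ! n) i j = 0) \<and>
        (\<forall>i. ks ! (n+1) \<le> i \<longrightarrow> snd (Ls ! n) i = 0)))"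

definition nn_dims :: "nnet \<Rightarrow> nat list" where
  "nn_dims \<Phi> = fst \<Phi>"

definition affine :: "nat \<Rightarrow> nat \<Rightarrow> (nat \<Rightarrow> nat \<Rightarrow> real) \<Rightarrow> (nat \<Rightarrow> real) \<Rightarrow> (nat \<Rightarrow> real) \<Rightarrow> (nat \<Rightarrow> real)" where
  "affine kout kin W B x = (\<lambda>i. if i < kout then (\<Sum>j<kin. W i j * x j) + B i else 0)"

definition relu :: "nat \<Rightarrow> (nat \<Rightarrow> real) \<Rightarrow> (nat \<Rightarrow> real)" where
  "relu k x = (\<lambda>i. if i < k then max (x i) 0 else 0)"

fun realize_aux :: "nat list \<Rightarrow> ((nat \<Rightarrow> nat \<Rightarrow> real) \<times> (nat \<Rightarrow> real)) list \<Rightarrow> (nat \<Rightarrow> real) \<Rightarrow> (nat \<Rightarrow> real)" where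
  "realize_aux (k0 # k1 # ks) ((W, B) # Ls) x =
     (if Ls = [] then affine k1 k0 W B x
      else realize_aux (k1 # ks) Ls (relu k1 (affine k1 k0 W B x)))"
| "realize_aux _ _ x = vzero"

definition nn_realization :: "nnet \<Rightarrow> (nat \<Rightarrow> real) \<Rightarrow> (nat \<Rightarrow> real)" where
  "nn_realization \<Phi> = realize_aux (fst \<Phi>) (snd \<Phi>)"

definition nn_realizes_scalar :: "nnet \<Rightarrow> (real \<Rightarrow> real) \<Rightarrow> bool" where
  "nn_realizes_scalar \<Phi> h \<longleftrightarrow> hd (nn_dims \<Phi>) = 1 \<and> last (nn_dims \<Phi>) = 1 \<and>
     (\<forall>w. nn_realization \<Phi> (\<lambda>i. if i = 0 then w else 0) 0 = h w)"

end

theory Submission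
  imports Defs
begin

text \<open>A Lipschitz \<open>f\<close> is replaced by its piecewise linear interpolant on a grid symmetric about 0.
The interpolant has the same Lipschitz constant \<open>L\<close> and is realised exactly by a ReLU network with
one hidden layer, two neurons per cell. On a cell of width \<open>w\<close> the error is at most \<open>2 L w\<close>, and
beyond the outermost knots \<open>\<plusminus>P\<close> it is at most \<open>L \<bar>x\<bar>\<close>. The tolerance \<open>\<surd>\<epsilon> max 1 x\<^sup>2\<close> therefore
allows cells of width \<open>\<surd>\<epsilon> max 1 x\<^sup>2 / (2 L)\<close> and requires \<open>P \<ge> L / \<surd>\<epsilon>\<close>. Knots that are uniform
on \<open>[0, 1]\<close> and have equally spaced reciprocals on \<open>[1, K]\<close>, with \<open>K \<approx> 2 L / \<surd>\<epsilon>\<close>, meet both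
requirements with \<open>O(L / \<surd>\<epsilon>)\<close> cells.\<close>

section \<open>Piecewise linear interpolation\<close>

definition ramp :: "real \<Rightarrow> real \<Rightarrow> real \<Rightarrow> real" where
  "ramp a b x = max (x - a) 0 - max (x - b) 0"

lemma ramp_eq_0: "x \<le> a \<Longrightarrow> a \<le> b \<Longrightarrow> ramp a b x = 0"
  by (simp add: ramp_def)

lemma ramp_eq_width: "b \<le> x \<Longrightarrow> a \<le> b \<Longrightarrow> ramp a b x = b - a"
  by (simp add: ramp_def)

lemma ramp_eq_offset: "a \<le> x \<Longrightarrow> x \<le> b \<Longrightarrow> ramp a b x = x - a"
  by (simp add: ramp_def)

lemma ramp_mono: "x \<le> y \<Longrightarrow> a \<le> b \<Longrightarrow> ramp a b x \<le> ramp a b y"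
  by (simp add: ramp_def max_def)

lemma ramp_increment_le: "x \<le> y \<Longrightarrow> ramp a b y - ramp a b x \<le> y - x"
  by (simp add: ramp_def max_def)

lemma sum_ramp_telescope: "(\<Sum>k<N. ramp (q k) (q (Suc k)) x) = ramp (q 0) (q N) x"
  unfolding ramp_def by (rule sum_lessThan_telescope')

definition chord_slope :: "(real \<Rightarrow> real) \<Rightarrow> (nat \<Rightarrow> real) \<Rightarrow> nat \<Rightarrow> real" where
  "chord_slope h q k = (h (q (Suc k)) - h (q k)) / (q (Suc k) - q k)"

lemma chord_slope_bound:
  assumes lip: "\<And>u v. \<bar>h u - h v\<bar> \<le> L * \<bar>u - v\<bar>" and lt: "q k < q (Suc k)"
  shows "\<bar>chord_slope h q k\<bar> \<le> L"
  using lip[of "q (Suc k)" "q k"] lt by (simp add: chord_slope_def abs_divide pos_divide_le_eq)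

definition pl_interp :: "(real \<Rightarrow> real) \<Rightarrow> (nat \<Rightarrow> real) \<Rightarrow> nat \<Rightarrow> real \<Rightarrow> real" where
  "pl_interp h q N x = h (q 0) + (\<Sum>k<N. chord_slope h q k * ramp (q k) (q (Suc k)) x)"

lemma continuous_pl_interp: "continuous_on UNIV (pl_interp h q N)"
  unfolding pl_interp_def ramp_def by (intro continuous_intros)

lemma strict_mono_on_atMost_SucI:
  assumes "\<And>k. k < N \<Longrightarrow> q k < (q (Suc k) :: 'a :: order)"
  shows "strict_mono_on {..N} q"
proof (rule strict_mono_onI)
  fix r s assume "r \<in> {..N}" "s \<in> {..N}" "r < s"
  then have "{r..<s} \<subseteq> {..<N}" by auto
  then show "q r < q s"
    using lift_Suc_mono_less_ivl[of "{..<N}" q r s] assms \<open>r < s\<close> by blast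
qed

lemma strict_mono_on_atMost_SucD: "strict_mono_on {..N} q \<Longrightarrow> k < N \<Longrightarrow> q k < q (Suc k)"
  by (simp add: strict_mono_onD)

lemma grid_cell_exists:
  assumes "q 0 \<le> x" "x < q N"
  shows "\<exists>i<N. q i \<le> x \<and> x < (q (Suc i) :: real)"
proof -
  define S where "S = {i. i \<le> N \<and> q i \<le> x}"
  define i where "i = Max S"
  have S: "finite S" "0 \<in> S" using assms(1) by (auto simp: S_def)
  then have "i \<in> S" unfolding i_def by (intro Max_in) auto
  then have i: "i \<le> N" "q i \<le> x" by (auto simp: S_def)
  with assms(2) have "i < N" by (cases "i = N") auto
  moreover have "x < q (Suc i)"
  proof (rule ccontr)
    assume "\<not> x < q (Suc i)"
    with \<open>i < N\<close> have "Suc i \<in> S" by (simp add: S_def)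
    with S(1) have "Suc i \<le> i" unfolding i_def by (rule Max_ge)
    then show False by simp
  qed
  ultimately show ?thesis using i(2) by blast
qed

lemma pl_interp_sum_below:
  assumes incr: "strict_mono_on {..N} q" and "i \<le> N" "q i \<le> x"
  shows "(\<Sum>k<i. chord_slope h q k * ramp (q k) (q (Suc k)) x) = h (q i) - h (q 0)"
proof -
  have "chord_slope h q k * ramp (q k) (q (Suc k)) x = h (q (Suc k)) - h (q k)" if "k < i" for k
  proof -
    have lt: "q k < q (Suc k)" using strict_mono_on_atMost_SucD[OF incr] that assms(2) by simp
    have "q (Suc k) \<le> x" using strict_mono_on_leD[OF incr, of "Suc k" i] that assms by simp
    then show ?thesis using lt by (simp add: ramp_eq_width chord_slope_def)
  qed
  then have "(\<Sum>k<i. chord_slope h q k * ramp (q k) (q (Suc k)) x) = (\<Sum>k<i. h (q (Suc k)) - h (q k))"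
    by simp
  also have "\<dots> = h (q i) - h (q 0)"
    by (rule sum_lessThan_telescope)
  finally show ?thesis .
qed

lemma pl_interp_sum_above:
  assumes incr: "strict_mono_on {..N} q" and "x \<le> q j"
  shows "(\<Sum>k\<in>{j..<N}. chord_slope h q k * ramp (q k) (q (Suc k)) x) = 0"
proof (rule sum.neutral, rule ballI)
  fix k assume k: "k \<in> {j..<N}"
  then have "x \<le> q k" using strict_mono_on_leD[OF incr, of j k] assms by auto
  with k strict_mono_on_atMost_SucD[OF incr] show "chord_slope h q k * ramp (q k) (q (Suc k)) x = 0"
    by (simp add: ramp_eq_0 less_imp_le)
qed

lemma pl_interp_on_cell:
  assumes incr: "strict_mono_on {..N} q" and i: "i < N" and x: "q i \<le> x" "x \<le> q (Suc i)"
  shows "pl_interp h q N x = h (q i) + chord_slope h q i * (x - q i)"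
proof -
  define \<phi> where "\<phi> k = chord_slope h q k * ramp (q k) (q (Suc k)) x" for k
  have "sum \<phi> {..<N} = sum \<phi> {..<i} + \<phi> i + sum \<phi> {Suc i..<N}"
    using sum.atLeastLessThan_concat[of 0 "Suc i" N \<phi>] i by (simp add: lessThan_atLeast0)
  then have "pl_interp h q N x = h (q 0) + (\<Sum>k<i. chord_slope h q k * ramp (q k) (q (Suc k)) x)
      + chord_slope h q i * ramp (q i) (q (Suc i)) x
      + (\<Sum>k\<in>{Suc i..<N}. chord_slope h q k * ramp (q k) (q (Suc k)) x)"
    by (simp add: pl_interp_def \<phi>_def)
  also have "\<dots> = h (q i) + chord_slope h q i * (x - q i)"
    using pl_interp_sum_below[OF incr, of i x h] pl_interp_sum_above[OF incr, of x "Suc i" h]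
      i x by (simp add: ramp_eq_offset)
  finally show ?thesis .
qed

lemma pl_interp_right:
  assumes incr: "strict_mono_on {..N} q" and "q N \<le> x"
  shows "pl_interp h q N x = h (q N)"
  using pl_interp_sum_below[OF incr, of N x h] assms(2) by (simp add: pl_interp_def)

lemma pl_interp_left:
  assumes incr: "strict_mono_on {..N} q" and "x \<le> q 0"
  shows "pl_interp h q N x = h (q 0)"
  using pl_interp_sum_above[OF incr, of x 0 h] assms(2) by (simp add: pl_interp_def atLeast0LessThan)

lemma pl_interp_node:
  assumes incr: "strict_mono_on {..N} q" and "i \<le> N"
  shows "pl_interp h q N (q i) = h (q i)"
proof (cases "i = N")
  case True
  then show ?thesis by (simp add: pl_interp_right[OF incr])
next
  case False
  with assms have "i < N" by simp
  moreover have "q i \<le> q (Suc i)" using strict_mono_on_atMost_SucD[OF incr \<open>i < N\<close>] by simp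
  ultimately show ?thesis by (simp add: pl_interp_on_cell[OF incr])
qed

lemma pl_interp_lipschitz:
  assumes incr: "strict_mono_on {..N} q" and lip: "\<And>u v. \<bar>h u - h v\<bar> \<le> L * \<bar>u - v\<bar>"
  shows "\<bar>pl_interp h q N y - pl_interp h q N x\<bar> \<le> L * \<bar>y - x\<bar>"
proof -
  have "\<bar>pl_interp h q N y - pl_interp h q N x\<bar> \<le> L * (y - x)" if xy: "x \<le> y" for x y
  proof -
    let ?d = "\<lambda>k. ramp (q k) (q (Suc k)) y - ramp (q k) (q (Suc k)) x"
    have "\<bar>pl_interp h q N y - pl_interp h q N x\<bar> = \<bar>\<Sum>k<N. chord_slope h q k * ?d k\<bar>"
      by (simp add: pl_interp_def sum_subtractf right_diff_distrib)
    also have "\<dots> \<le> (\<Sum>k<N. \<bar>chord_slope h q k\<bar> * ?d k)"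
      using sum_abs[of "\<lambda>k. chord_slope h q k * ?d k" "{..<N}"] strict_mono_on_atMost_SucD[OF incr]
      by (simp add: abs_mult ramp_mono[OF xy] less_imp_le)
    also have "\<dots> \<le> (\<Sum>k<N. L * ?d k)"
      using strict_mono_on_atMost_SucD[OF incr] chord_slope_bound[OF lip]
      by (intro sum_mono mult_right_mono) (auto simp: ramp_mono[OF xy] less_imp_le)
    also have "\<dots> = L * (ramp (q 0) (q N) y - ramp (q 0) (q N) x)"
      by (simp add: sum_distrib_left[symmetric] sum_subtractf sum_ramp_telescope)
    also have "\<dots> \<le> L * (y - x)"
    proof -
      have "0 \<le> L" using lip[of 1 0] by simp
      then show ?thesis using ramp_increment_le[OF xy] by (intro mult_left_mono)
    qed
    finally show ?thesis .
  qed
  note ordered = this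
  show ?thesis
  proof (cases "x \<le> y")
    case True
    then show ?thesis using ordered[OF True] by simp
  next
    case False
    then have "\<bar>pl_interp h q N x - pl_interp h q N y\<bar> \<le> L * (x - y)" by (intro ordered) simp
    moreover have "\<bar>pl_interp h q N y - pl_interp h q N x\<bar> = \<bar>pl_interp h q N x - pl_interp h q N y\<bar>"
      by (rule abs_minus_commute)
    ultimately show ?thesis using False by simp
  qed
qed

lemma pl_interp_error_on_cell:
  assumes incr: "strict_mono_on {..N} q" and lip: "\<And>u v. \<bar>h u - h v\<bar> \<le> L * \<bar>u - v\<bar>"
    and i: "i < N" and x: "q i \<le> x" "x \<le> q (Suc i)"
  shows "\<bar>h x - pl_interp h q N x\<bar> \<le> 2 * L * (q (Suc i) - q i)"
proof -
  have lt: "q i < q (Suc i)" using strict_mono_on_atMost_SucD[OF incr i] .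
  have "\<bar>h x - pl_interp h q N x\<bar> = \<bar>(h x - h (q i)) - chord_slope h q i * (x - q i)\<bar>"
    using pl_interp_on_cell[OF incr i x] by simp
  also have "\<dots> \<le> \<bar>h x - h (q i)\<bar> + \<bar>chord_slope h q i\<bar> * (x - q i)"
    using abs_triangle_ineq4[of "h x - h (q i)" "chord_slope h q i * (x - q i)"] x(1)
    by (simp add: abs_mult)
  also have "\<dots> \<le> L * (x - q i) + L * (x - q i)"
    using lip[of x "q i"] mult_right_mono[OF chord_slope_bound[OF lip lt], of "x - q i"] x(1) by simp
  also have "\<dots> \<le> 2 * L * (q (Suc i) - q i)"
    using lip[of 1 0] x(2) by (simp add: mult_left_mono)
  finally show ?thesis .
qed

lemma pl_interp_error:
  assumes incr: "strict_mono_on {..N} q" and lip: "\<And>u v. \<bar>h u - h v\<bar> \<le> L * \<bar>u - v\<bar>"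
    and r: "0 \<le> r"
    and cell: "\<And>k x. k < N \<Longrightarrow> q k \<le> x \<Longrightarrow> x \<le> q (Suc k) \<Longrightarrow>
                 2 * L * (q (Suc k) - q k) \<le> r * max 1 (x\<^sup>2)"
    and left: "q 0 \<le> 0" "L \<le> r * \<bar>q 0\<bar>" and right: "0 \<le> q N" "L \<le> r * \<bar>q N\<bar>"
  shows "\<bar>h x - pl_interp h q N x\<bar> \<le> r * max 1 (x\<^sup>2)"
proof -
  have outside: "L * \<bar>x - e\<bar> \<le> r * max 1 (x\<^sup>2)"
    if "L \<le> r * \<bar>e\<bar>" "\<bar>x - e\<bar> \<le> \<bar>x\<bar>" "\<bar>e\<bar> \<le> \<bar>x\<bar>" for e
  proof -
    have "L * \<bar>x - e\<bar> \<le> r * \<bar>e\<bar> * \<bar>x\<bar>" using that r by (intro mult_mono) auto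
    also have "\<dots> \<le> r * \<bar>x\<bar> * \<bar>x\<bar>" using that r by (intro mult_right_mono mult_left_mono) auto
    also have "\<dots> = r * x\<^sup>2" by (simp only: mult.assoc abs_mult_self_eq power2_eq_square)
    also have "\<dots> \<le> r * max 1 (x\<^sup>2)" using r by (simp add: mult_left_mono)
    finally show ?thesis .
  qed
  consider (below) "x < q 0" | (between) "q 0 \<le> x" "x < q N" | (above) "q N \<le> x" by linarith
  then show ?thesis
  proof cases
    case below
    then have "\<bar>h x - pl_interp h q N x\<bar> \<le> L * \<bar>x - q 0\<bar>"
      using pl_interp_left[OF incr, of x h] lip[of x "q 0"] by simp
    also have "\<dots> \<le> r * max 1 (x\<^sup>2)" using below left by (intro outside) auto
    finally show ?thesis .
  next
    case between
    then obtain i where "i < N" "q i \<le> x" "x < q (Suc i)" using grid_cell_exists by blast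
    then show ?thesis
      using pl_interp_error_on_cell[OF incr lip, of i x] cell[of i x] by simp
  next
    case above
    then have "\<bar>h x - pl_interp h q N x\<bar> \<le> L * \<bar>x - q N\<bar>"
      using pl_interp_right[OF incr, of x h] lip[of x "q N"] by simp
    also have "\<dots> \<le> r * max 1 (x\<^sup>2)" using above right by (intro outside) auto
    finally show ?thesis .
  qed
qed

section \<open>Graded symmetric grids\<close>

definition sym_grid :: "(nat \<Rightarrow> real) \<Rightarrow> nat \<Rightarrow> nat \<Rightarrow> real" where
  "sym_grid p M k = (if k \<le> M then - p (M - k) else p (k - M))"

lemma sym_grid_left: "k \<le> M \<Longrightarrow> sym_grid p M k = - p (M - k)"
  by (simp add: sym_grid_def)

lemma sym_grid_right: "p 0 = 0 \<Longrightarrow> M \<le> k \<Longrightarrow> sym_grid p M k = p (k - M)"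
  by (cases "k = M") (simp_all add: sym_grid_def)

lemma sym_grid_strict_mono:
  assumes p0: "p 0 = 0" and incr: "strict_mono_on {..M} p"
  shows "strict_mono_on {..2 * M} (sym_grid p M)"
proof (rule strict_mono_on_atMost_SucI)
  fix k assume k: "k < 2 * M"
  show "sym_grid p M k < sym_grid p M (Suc k)"
  proof (cases "k < M")
    case True
    then have "p (M - Suc k) < p (M - k)" by (intro strict_mono_onD[OF incr]) auto
    with True show ?thesis by (simp add: sym_grid_left)
  next
    case False
    with k have "p (k - M) < p (Suc k - M)" by (intro strict_mono_onD[OF incr]) auto
    with False p0 show ?thesis by (simp add: sym_grid_right)
  qed
qed

lemma sym_grid_mesh:
  assumes p0: "p 0 = 0" and incr: "strict_mono_on {..M} p" and "0 \<le> \<delta>"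
    and mesh: "\<And>j. j < M \<Longrightarrow> p (Suc j) - p j \<le> \<delta> * max 1 ((p j)\<^sup>2)"
    and k: "k < 2 * M" and x: "sym_grid p M k \<le> x" "x \<le> sym_grid p M (Suc k)"
  shows "sym_grid p M (Suc k) - sym_grid p M k \<le> \<delta> * max 1 (x\<^sup>2)"
proof -
  have p_nonneg: "0 \<le> p j" if "j \<le> M" for j
    using strict_mono_on_leD[OF incr, of 0 j] that p0 by simp
  obtain j where j: "j < M" "sym_grid p M (Suc k) - sym_grid p M k = p (Suc j) - p j" "p j \<le> \<bar>x\<bar>"
  proof (cases "k < M")
    case True
    have "M - Suc k < M" using True by simp
    moreover have "sym_grid p M (Suc k) - sym_grid p M k = p (Suc (M - Suc k)) - p (M - Suc k)"
      using True by (simp add: sym_grid_left Suc_diff_Suc)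
    moreover have "p (M - Suc k) \<le> \<bar>x\<bar>"
      using x(2) True p_nonneg[of "M - Suc k"] by (simp add: sym_grid_left)
    ultimately show ?thesis by (rule that)
  next
    case False
    have "k - M < M" using False k by simp
    moreover have "sym_grid p M (Suc k) - sym_grid p M k = p (Suc (k - M)) - p (k - M)"
      using False p0 by (simp add: sym_grid_right Suc_diff_le)
    moreover have "p (k - M) \<le> \<bar>x\<bar>"
      using x(1) False p0 by (simp add: sym_grid_right)
    ultimately show ?thesis by (rule that)
  qed
  have "(p j)\<^sup>2 \<le> x\<^sup>2"
    using j(3) p_nonneg[of j] j(1) by (metis abs_le_square_iff abs_of_nonneg less_imp_le)
  then have "\<delta> * max 1 ((p j)\<^sup>2) \<le> \<delta> * max 1 (x\<^sup>2)"
    using \<open>0 \<le> \<delta>\<close> by (intro mult_left_mono) auto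
  with j mesh[OF j(1)] show ?thesis by simp
qed

text \<open>Beyond \<open>k = K\<close> the reciprocals of the knots are spaced by \<open>1 / (2 K)\<close>, so the mesh next to a
knot \<open>p\<close> is about \<open>p\<^sup>2 / K\<close>.\<close>

definition knots :: "nat \<Rightarrow> nat \<Rightarrow> real" where
  "knots K k = (if k \<le> K then real k / real K else 2 * real K / real (3 * K - k))"

lemma knots_0: "knots K 0 = 0"
  by (simp add: knots_def)

lemma knots_tail: "K \<le> k \<Longrightarrow> k < 3 * K \<Longrightarrow> knots K k = 2 * real K / real (3 * K - k)"
  by (cases "k = K") (auto simp: knots_def)

lemma knots_last: "1 \<le> K \<Longrightarrow> knots K (3 * K - 2) = real K"
  by (subst knots_tail) (auto simp: of_nat_diff)

lemma knots_step:
  assumes K: "1 \<le> K" and k: "k < 3 * K - 2"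
  shows "knots K k < knots K (Suc k)" "knots K (Suc k) - knots K k \<le> max 1 ((knots K k)\<^sup>2) / real K"
proof -
  have "knots K k < knots K (Suc k) \<and> knots K (Suc k) - knots K k \<le> max 1 ((knots K k)\<^sup>2) / real K"
  proof (cases "k < K")
    case True
    then have "knots K (Suc k) - knots K k = 1 / real K"
      by (simp add: knots_def diff_divide_distrib[symmetric])
    moreover have "0 < 1 / real K" using K by simp
    moreover have "1 / real K \<le> max 1 ((knots K k)\<^sup>2) / real K" by (simp add: divide_right_mono)
    ultimately show ?thesis by linarith
  next
    case False
    define m where "m = real (3 * K - Suc k)"
    have m: "2 \<le> m" using k False by (simp add: m_def)
    have kk: "knots K k = 2 * real K / (m + 1)" "knots K (Suc k) = 2 * real K / m"
      using False k by (simp_all add: knots_tail m_def of_nat_diff)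
    have "2 * real K / (m + 1) < 2 * real K / m" using m K by (simp add: frac_less2)
    moreover have "2 * real K / m - 2 * real K / (m + 1) \<le> (2 * real K / (m + 1))\<^sup>2 / real K"
    proof -
      have nz: "m \<noteq> 0" "m + 1 \<noteq> 0" "real K \<noteq> 0" using m K by auto
      then have "2 * real K / m - 2 * real K / (m + 1) = 2 * real K / (m * (m + 1))"
        by (simp add: field_simps)
      also have "\<dots> \<le> 2 * real K / (m * (m + 1)) * (2 * m / (m + 1))"
      proof -
        have "1 \<le> 2 * m / (m + 1)" "0 \<le> 2 * real K / (m * (m + 1))" using m by simp_all
        then show ?thesis
          using mult_left_mono[of 1 "2 * m / (m + 1)" "2 * real K / (m * (m + 1))"]
          by (simp only: mult_1_right)
      qed
      also have "\<dots> = (2 * real K / (m + 1))\<^sup>2 / real K"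
        using nz by (simp add: power_divide power2_eq_square)
      finally show ?thesis .
    qed
    moreover have "(knots K k)\<^sup>2 / real K \<le> max 1 ((knots K k)\<^sup>2) / real K"
      by (simp add: divide_right_mono)
    ultimately show ?thesis unfolding kk by linarith
  qed
  then show "knots K k < knots K (Suc k)" "knots K (Suc k) - knots K k \<le> max 1 ((knots K k)\<^sup>2) / real K"
    by auto
qed

definition knot_grid :: "nat \<Rightarrow> nat \<Rightarrow> real" where
  "knot_grid K = sym_grid (knots K) (3 * K - 2)"

lemma knot_grid_strict_mono: "1 \<le> K \<Longrightarrow> strict_mono_on {..2 * (3 * K - 2)} (knot_grid K)"
  unfolding knot_grid_def
  by (intro sym_grid_strict_mono strict_mono_on_atMost_SucI knots_0 knots_step(1)) auto

lemma knot_grid_ends: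
  assumes "1 \<le> K"
  shows "knot_grid K 0 = - real K" "knot_grid K (3 * K - 2) = 0" "knot_grid K (2 * (3 * K - 2)) = real K"
proof -
  have "2 * (3 * K - 2) - (3 * K - 2) = 3 * K - 2" by simp
  then show "knot_grid K 0 = - real K" "knot_grid K (3 * K - 2) = 0" "knot_grid K (2 * (3 * K - 2)) = real K"
    using assms by (simp_all add: knot_grid_def sym_grid_left sym_grid_right knots_0 knots_last)
qed

lemma knot_grid_mesh:
  assumes K: "1 \<le> K" and "k < 2 * (3 * K - 2)" "knot_grid K k \<le> x" "x \<le> knot_grid K (Suc k)"
  shows "knot_grid K (Suc k) - knot_grid K k \<le> max 1 (x\<^sup>2) / real K"
proof -
  have "knots K (Suc j) - knots K j \<le> 1 / real K * max 1 ((knots K j)\<^sup>2)" if "j < 3 * K - 2" for j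
    using knots_step(2)[OF K that] by simp
  then have "knot_grid K (Suc k) - knot_grid K k \<le> 1 / real K * max 1 (x\<^sup>2)"
    using assms unfolding knot_grid_def
    by (intro sym_grid_mesh knots_0 strict_mono_on_atMost_SucI knots_step(1)) auto
  then show ?thesis by simp
qed

lemma abs_le_sqrt_mult_iff: "0 \<le> c \<Longrightarrow> \<bar>u\<bar> \<le> sqrt c * \<bar>v\<bar> \<longleftrightarrow> u\<^sup>2 \<le> c * (v :: real)\<^sup>2"
  by (metis real_sqrt_abs real_sqrt_le_iff real_sqrt_mult)

lemma max_1_sq_sq_le: "(max 1 (x\<^sup>2))\<^sup>2 \<le> 1 + \<bar>x :: real\<bar> ^ 4"
proof (cases "x\<^sup>2 \<le> 1")
  case True
  then show ?thesis by simp
next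
  case False
  then have "(max 1 (x\<^sup>2))\<^sup>2 = \<bar>x\<bar> ^ 4" by (simp add: power_even_abs flip: power_mult)
  then show ?thesis by simp
qed

lemma knot_grid_interp_error:
  assumes lip: "\<And>u v. \<bar>h u - h v\<bar> \<le> L * \<bar>u - v\<bar>" and L: "0 \<le> L" and "0 < \<epsilon>"
    and K: "1 \<le> K" "2 * L \<le> sqrt \<epsilon> * real K"
  shows "\<bar>h x - pl_interp h (knot_grid K) (2 * (3 * K - 2)) x\<bar>\<^sup>2 \<le> \<epsilon> * (1 + \<bar>x\<bar> ^ 4)"
proof -
  have "\<bar>h x - pl_interp h (knot_grid K) (2 * (3 * K - 2)) x\<bar> \<le> sqrt \<epsilon> * max 1 (x\<^sup>2)"
  proof (rule pl_interp_error[OF knot_grid_strict_mono[OF K(1)] lip])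
    fix k y assume "k < 2 * (3 * K - 2)" "knot_grid K k \<le> y" "y \<le> knot_grid K (Suc k)"
    then have "2 * L * (knot_grid K (Suc k) - knot_grid K k) \<le> 2 * L * (max 1 (y\<^sup>2) / real K)"
      using knot_grid_mesh[OF K(1)] L by (intro mult_left_mono) auto
    also have "\<dots> = 2 * L / real K * max 1 (y\<^sup>2)" by simp
    also have "\<dots> \<le> sqrt \<epsilon> * max 1 (y\<^sup>2)"
      using K by (intro mult_right_mono) (simp_all add: divide_le_eq mult.commute)
    finally show "2 * L * (knot_grid K (Suc k) - knot_grid K k) \<le> sqrt \<epsilon> * max 1 (y\<^sup>2)" .
  qed (use K L \<open>0 < \<epsilon>\<close> knot_grid_ends[OF K(1)] in auto)
  then have "\<bar>h x - pl_interp h (knot_grid K) (2 * (3 * K - 2)) x\<bar>\<^sup>2 \<le> \<epsilon> * (max 1 (x\<^sup>2))\<^sup>2"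
    using abs_le_sqrt_mult_iff[of \<epsilon>] \<open>0 < \<epsilon>\<close> by fastforce
  also have "\<dots> \<le> \<epsilon> * (1 + \<bar>x\<bar> ^ 4)"
    using max_1_sq_sq_le \<open>0 < \<epsilon>\<close> by (intro mult_left_mono) auto
  finally show ?thesis .
qed

section \<open>ReLU networks with one hidden layer\<close>

definition shallow_net :: "nat \<Rightarrow> (nat \<Rightarrow> real) \<Rightarrow> (nat \<Rightarrow> real) \<Rightarrow> (nat \<Rightarrow> real) \<Rightarrow> real \<Rightarrow> nnet" where
  "shallow_net k w \<theta> a B = ([1, k, 1],
     [(\<lambda>i j. if i < k \<and> j = 0 then w i else 0, \<lambda>i. if i < k then \<theta> i else 0),
      (\<lambda>i j. if i = 0 \<and> j < k then a j else 0, \<lambda>i. if i = 0 then B else 0)])"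

lemma nn_valid_shallow_net: "0 < k \<Longrightarrow> nn_valid (shallow_net k w \<theta> a B)"
  by (auto simp: nn_valid_def shallow_net_def less_Suc_eq)

lemma nn_dims_shallow_net: "nn_dims (shallow_net k w \<theta> a B) = [1, k, 1]"
  by (simp add: nn_dims_def shallow_net_def)

lemma nn_realization_shallow_net:
  "nn_realization (shallow_net k w \<theta> a B) (\<lambda>i. if i = 0 then x else 0) 0
     = B + (\<Sum>j<k. a j * max (w j * x + \<theta> j) 0)"
  by (simp add: nn_realization_def shallow_net_def affine_def relu_def)

text \<open>Neurons \<open>k\<close> and \<open>N + k\<close> compute \<open>max (x - q k) 0\<close> and \<open>max (x - q (Suc k)) 0\<close>; their
difference is \<open>ramp (q k) (q (Suc k)) x\<close>.\<close>

definition pl_net :: "(real \<Rightarrow> real) \<Rightarrow> (nat \<Rightarrow> real) \<Rightarrow> nat \<Rightarrow> nnet" where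
  "pl_net h q N = shallow_net (2 * N) (\<lambda>_. 1)
     (\<lambda>j. if j < N then - q j else - q (Suc (j - N)))
     (\<lambda>j. if j < N then chord_slope h q j else - chord_slope h q (j - N)) (h (q 0))"

lemma nn_valid_pl_net: "0 < N \<Longrightarrow> nn_valid (pl_net h q N)"
  by (simp add: pl_net_def nn_valid_shallow_net)

lemma nn_dims_pl_net: "nn_dims (pl_net h q N) = [1, 2 * N, 1]"
  by (simp add: pl_net_def nn_dims_shallow_net)

lemma pl_net_realizes: "nn_realizes_scalar (pl_net h q N) (pl_interp h q N)"
proof -
  have "nn_realization (pl_net h q N) (\<lambda>i. if i = 0 then x else 0) 0 = pl_interp h q N x" for x
  proof -
    define \<phi> where "\<phi> j = (if j < N then chord_slope h q j else - chord_slope h q (j - N))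
      * max (1 * x + (if j < N then - q j else - q (Suc (j - N)))) 0" for j
    have "sum \<phi> {..<2 * N} = sum \<phi> {..<N} + (\<Sum>k<N. \<phi> (k + N))"
      using sum.atLeastLessThan_concat[of 0 N "2 * N" \<phi>] sum.shift_bounds_nat_ivl[of \<phi> 0 N N]
      by (simp add: lessThan_atLeast0 mult_2)
    also have "\<dots> = (\<Sum>k<N. chord_slope h q k * ramp (q k) (q (Suc k)) x)"
      by (simp add: \<phi>_def ramp_def right_diff_distrib sum_subtractf sum_negf)
    finally show ?thesis
      by (simp add: pl_net_def nn_realization_shallow_net pl_interp_def \<phi>_def)
  qed
  then show ?thesis by (simp add: nn_realizes_scalar_def nn_dims_pl_net)
qed

section \<open>Approximation of Lipschitz functions\<close>

definition knot_number :: "real \<Rightarrow> real \<Rightarrow> nat" where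
  "knot_number L \<epsilon> = nat \<lceil>2 * L / sqrt \<epsilon>\<rceil>"

lemma knot_number_ge:
  assumes "0 < L" "0 < \<epsilon>"
  shows "1 \<le> knot_number L \<epsilon>" "2 * L \<le> sqrt \<epsilon> * real (knot_number L \<epsilon>)"
proof -
  have "0 < 2 * L / sqrt \<epsilon>" using assms by simp
  then have "0 < knot_number L \<epsilon>" "2 * L / sqrt \<epsilon> \<le> real (knot_number L \<epsilon>)"
    by (simp_all add: knot_number_def)
  then show "1 \<le> knot_number L \<epsilon>" "2 * L \<le> sqrt \<epsilon> * real (knot_number L \<epsilon>)"
    using assms by (simp_all add: divide_le_eq mult.commute)
qed

lemma knot_number_le:
  assumes "0 < L" "0 < \<epsilon>"
  shows "real (knot_number L \<epsilon>) \<le> 2 * L / sqrt \<epsilon> + 1"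
proof -
  have "real (knot_number L \<epsilon>) = of_int \<lceil>2 * L / sqrt \<epsilon>\<rceil>"
    using assms by (simp add: knot_number_def)
  then show ?thesis using ceiling_correct[of "2 * L / sqrt \<epsilon>"] by linarith
qed

definition relu_approx :: "(real \<Rightarrow> real) \<Rightarrow> real \<Rightarrow> real \<Rightarrow> real \<Rightarrow> real" where
  "relu_approx h L \<epsilon> = pl_interp h (knot_grid (knot_number L \<epsilon>)) (2 * (3 * knot_number L \<epsilon> - 2))"

definition relu_approx_net :: "(real \<Rightarrow> real) \<Rightarrow> real \<Rightarrow> real \<Rightarrow> nnet" where
  "relu_approx_net h L \<epsilon> = pl_net h (knot_grid (knot_number L \<epsilon>)) (2 * (3 * knot_number L \<epsilon> - 2))"

lemma continuous_relu_approx: "continuous_on UNIV (relu_approx h L \<epsilon>)"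
  by (simp add: relu_approx_def continuous_pl_interp)

lemma relu_approx_net_realizes: "nn_realizes_scalar (relu_approx_net h L \<epsilon>) (relu_approx h L \<epsilon>)"
  by (simp add: relu_approx_net_def relu_approx_def pl_net_realizes)

lemma nn_dims_relu_approx_net:
  "nn_dims (relu_approx_net h L \<epsilon>) = [1, 2 * (2 * (3 * knot_number L \<epsilon> - 2)), 1]"
  by (simp add: relu_approx_net_def nn_dims_pl_net)

lemma nn_valid_relu_approx_net: "0 < L \<Longrightarrow> 0 < \<epsilon> \<Longrightarrow> nn_valid (relu_approx_net h L \<epsilon>)"
  using knot_number_ge(1)[of L \<epsilon>] by (simp add: relu_approx_net_def nn_valid_pl_net)

lemma relu_approx_0: "0 < L \<Longrightarrow> 0 < \<epsilon> \<Longrightarrow> relu_approx h L \<epsilon> 0 = h 0"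
  using pl_interp_node[OF knot_grid_strict_mono, of "knot_number L \<epsilon>" "3 * knot_number L \<epsilon> - 2" h]
    knot_grid_ends[of "knot_number L \<epsilon>"] knot_number_ge(1)[of L \<epsilon>]
  by (simp add: relu_approx_def)

lemma relu_approx_lipschitz:
  assumes "\<And>u v. \<bar>h u - h v\<bar> \<le> L * \<bar>u - v\<bar>" "0 < L" "0 < \<epsilon>"
  shows "\<bar>relu_approx h L \<epsilon> y - relu_approx h L \<epsilon> x\<bar> \<le> L * \<bar>y - x\<bar>"
  unfolding relu_approx_def
  by (rule pl_interp_lipschitz[OF knot_grid_strict_mono[OF knot_number_ge(1)[OF assms(2,3)]] assms(1)])

lemma relu_approx_error:
  assumes "\<And>u v. \<bar>h u - h v\<bar> \<le> L * \<bar>u - v\<bar>" "0 < L" "0 < \<epsilon>"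
  shows "\<bar>h x - relu_approx h L \<epsilon> x\<bar>\<^sup>2 \<le> \<epsilon> * (1 + \<bar>x\<bar> ^ 4)"
  unfolding relu_approx_def
  using knot_grid_interp_error[OF assms(1) _ assms(3) knot_number_ge[OF assms(2,3)]] assms(2) by simp

lemma relu_approx_net_width:
  assumes "0 < L" "0 < \<epsilon>" "\<epsilon> < 1"
  shows "real (Max (set (nn_dims (relu_approx_net h L \<epsilon>)))) \<le> 16 * (1 + 2 * L) * \<epsilon> powr (-2)"
proof -
  define K where "K = knot_number L \<epsilon>"
  have K: "1 \<le> K" "real K \<le> 2 * L / sqrt \<epsilon> + 1"
    using knot_number_ge(1) knot_number_le assms by (simp_all add: K_def)
  have "real (Max (set (nn_dims (relu_approx_net h L \<epsilon>)))) = 12 * real K - 8"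
    using K(1) by (simp add: nn_dims_relu_approx_net K_def[symmetric] max_def of_nat_diff)
  also have "\<dots> \<le> 12 * (2 * L / sqrt \<epsilon> + 1) - 8"
    using K(2) by (intro diff_right_mono mult_left_mono) simp_all
  also have "\<dots> = 24 * L * (1 / sqrt \<epsilon>) + 4" by simp
  also have "\<dots> \<le> 24 * L * \<epsilon> powr (-2) + 16 * \<epsilon> powr (-2)"
  proof -
    have "\<epsilon>\<^sup>2 \<le> \<epsilon>" "\<epsilon> \<le> sqrt \<epsilon>"
      using assms by (simp_all add: power2_eq_square real_le_rsqrt)
    then have "1 / sqrt \<epsilon> \<le> \<epsilon> powr (-2)"
      using assms by (simp add: powr_minus_divide powr_numeral frac_le)
    moreover have "1 \<le> \<epsilon> powr (-2)"
      using assms by (simp add: powr_minus_divide powr_numeral power_le_one)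
    ultimately show ?thesis
      using assms by (intro add_mono mult_left_mono) simp_all
  qed
  also have "\<dots> \<le> 16 * (1 + 2 * L) * \<epsilon> powr (-2)"
    using assms by (simp add: algebra_simps)
  finally show ?thesis .
qed

lemma size_constant_ge:
  assumes "0 \<le> c"
  shows "64 * (1 + 2 * sqrt c)
    \<le> 64 * (1 + \<bar>c powr (1/2) * (4 * c powr (1/2) + 2 * c powr (1/2) * T powr (-3/2))\<bar> powr (1/2))"
proof -
  define s where "s = sqrt c"
  have s: "0 \<le> s" "c = s * s" "c powr (1/2) = s" using assms by (simp_all add: s_def powr_half_sqrt)
  have "c powr (1/2) * (4 * c powr (1/2) + 2 * c powr (1/2) * T powr (-3/2)) = 4 * c + 2 * c * T powr (-3/2)"
    by (simp add: s(3)) (simp add: s(2) algebra_simps)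
  moreover have "sqrt (4 * c) \<le> sqrt (4 * c + 2 * c * T powr (-3/2))"
    using assms by simp
  ultimately show ?thesis
    using assms by (simp add: powr_half_sqrt real_sqrt_mult)
qed

lemma three_le_size_bound:
  assumes "64 \<le> b" "1 \<le> d" "0 \<le> c" "0 < \<epsilon>" "\<epsilon> < 1"
  shows "3 \<le> b * real d powr c * \<epsilon> powr (-c) / 4"
proof -
  have "1 \<le> real d powr c" using assms by (intro ge_one_powr_ge_zero) auto
  moreover have "1 \<le> \<epsilon> powr (-c)"
  proof -
    have "\<epsilon> powr c \<le> 1" using assms by (intro powr_le1) auto
    then show ?thesis using assms by (simp add: powr_minus_divide le_divide_eq)
  qed
  ultimately have "1 \<le> real d powr c * \<epsilon> powr (-c)"
    using mult_mono[of 1 "real d powr c" 1 "\<epsilon> powr (-c)"] by simp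
  then have "64 * 1 \<le> b * (real d powr c * \<epsilon> powr (-c))"
    using assms(1) by (intro mult_mono) auto
  then show ?thesis by simp
qed

lemma ennreal_le_of_add_le:
  assumes "a + ennreal x \<le> ennreal y" "0 \<le> y"
  shows "x \<le> y"
proof -
  have "ennreal x \<le> ennreal y" using assms(1) by (rule order_trans[rotated]) (simp add: add_increasing)
  then show ?thesis using assms(2) by (simp add: ennreal_le_iff)
qed

theorem lemma2p1:
  fixes T c :: real and f :: "real \<Rightarrow> real"
    and \<beta> :: "nat \<Rightarrow> (nat \<Rightarrow> real) \<Rightarrow> (nat \<Rightarrow> real)"
    and \<sigma> :: "nat \<Rightarrow> (nat \<Rightarrow> real) \<Rightarrow> (nat \<Rightarrow> nat \<Rightarrow> real)"
    and \<gamma> :: "nat \<Rightarrow> (nat \<Rightarrow> real) \<Rightarrow> (nat \<Rightarrow> real) \<Rightarrow> (nat \<Rightarrow> real)"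
    and g :: "nat \<Rightarrow> (nat \<Rightarrow> real) \<Rightarrow> real"
    and \<nu> :: "nat \<Rightarrow> (nat \<Rightarrow> real) measure"
    and b :: real
  assumes T: "0 < T" and c: "2 \<le> c"
    and f_cont: "continuous_on UNIV f"
    and \<beta>_cont: "\<And>d. 1 \<le> d \<Longrightarrow> continuous_on (Rd d) (\<beta> d) \<and> \<beta> d ` Rd d \<subseteq> Rd d"
    and \<sigma>_cont: "\<And>d. 1 \<le> d \<Longrightarrow> continuous_on (Rd d) (\<sigma> d) \<and> \<sigma> d ` Rd d \<subseteq> Rmat d"
    and \<gamma>_cont: "\<And>d. 1 \<le> d \<Longrightarrow> continuous_on (Rd d \<times> Rd d) (\<lambda>(x, z). \<gamma> d x z) \<and>
                   (\<forall>x\<in>Rd d. \<forall>z\<in>Rd d. \<gamma> d x z \<in> Rd d)"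
    and g_cont: "\<And>d. 1 \<le> d \<Longrightarrow> continuous_on (Rd d) (g d)"
    and \<nu>_levy: "\<And>d. 1 \<le> d \<Longrightarrow> levy_measure d (\<nu> d)"
    and A1: "\<And>d. 1 \<le> d \<Longrightarrow> \<exists>C>0. \<forall>x\<in>Rd d. \<forall>y\<in>Rd d. \<forall>z\<in>Rd d.
               (vnorm d (\<gamma> d x z))\<^sup>2 \<le> C * min 1 ((vnorm d z)\<^sup>2) \<and>
               (vnorm d (vdiff (\<gamma> d x z) (\<gamma> d y z)))\<^sup>2
                 \<le> C * (vnorm d (vdiff x y))\<^sup>2 * min 1 ((vnorm d z)\<^sup>2)"
    and A2_ex: "\<And>d x z. 1 \<le> d \<Longrightarrow> x \<in> Rd d \<Longrightarrow> z \<in> Rd d \<Longrightarrow>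
               \<exists>J. has_jacobian d (\<lambda>u. \<gamma> d u z) x J"
    and A2: "\<And>d. 1 \<le> d \<Longrightarrow> \<exists>lam>0. \<forall>x\<in>Rd d. \<forall>z\<in>Rd d. \<forall>J \<delta>.
               has_jacobian d (\<lambda>u. \<gamma> d u z) x J \<longrightarrow> \<delta> \<in> {0..1} \<longrightarrow>
               lam \<le> \<bar>mdet d (\<lambda>i j. (if i = j then 1 else 0) + \<delta> * J i j)\<bar>"
    and A3_lip: "\<And>d x y. 1 \<le> d \<Longrightarrow> x \<in> Rd d \<Longrightarrow> y \<in> Rd d \<Longrightarrow>
               ennreal ((vnorm d (vdiff (\<beta> d x) (\<beta> d y)))\<^sup>2 + (fnorm d (mdiff (\<sigma> d x) (\<sigma> d y)))\<^sup>2)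
               + (\<integral>\<^sup>+ z. ennreal ((vnorm d (vdiff (\<gamma> d x z) (\<gamma> d y z)))\<^sup>2) \<partial>(\<nu> d))
               \<le> ennreal (c * (vnorm d (vdiff x y))\<^sup>2)"
    and A3_f: "\<And>w1 w2. \<bar>f w1 - f w2\<bar>\<^sup>2 \<le> c * \<bar>w1 - w2\<bar>\<^sup>2"
    and A3_g: "\<And>d x y. 1 \<le> d \<Longrightarrow> x \<in> Rd d \<Longrightarrow> y \<in> Rd d \<Longrightarrow>
               \<bar>g d x - g d y\<bar>\<^sup>2 \<le> c * real d powr c * T powr (-1) * (vnorm d (vdiff x y))\<^sup>2"
    and A3_0: "\<And>d. 1 \<le> d \<Longrightarrow>
               ennreal ((vnorm d (\<beta> d vzero))\<^sup>2 + (fnorm d (\<sigma> d vzero))\<^sup>2)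
               + (\<integral>\<^sup>+ z. ennreal ((vnorm d (\<gamma> d vzero z))\<^sup>2) \<partial>(\<nu> d))
               + ennreal (T ^ 3 * (\<bar>f 0\<bar> + 1)\<^sup>2 + T * \<bar>g d vzero\<bar>\<^sup>2)
               \<le> ennreal (c * real d powr c)"
    and b_def: "b = 64 * (1 + \<bar>c powr (1/2) * (4 * c powr (1/2) + 2 * c powr (1/2) * T powr (-3/2))\<bar> powr (1/2))"
  shows "\<exists>(F :: real \<Rightarrow> real \<Rightarrow> real) (\<Phi> :: real \<Rightarrow> nnet).
           (\<forall>\<epsilon>\<in>{0<..<1}. continuous_on UNIV (F \<epsilon>) \<and> nn_valid (\<Phi> \<epsilon>)) \<and>
           (\<forall>d \<epsilon> w1 w2. 1 \<le> d \<longrightarrow> \<epsilon> \<in> {0<..<1} \<longrightarrow>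
              nn_realizes_scalar (\<Phi> \<epsilon>) (F \<epsilon>) \<and>
              length (nn_dims (\<Phi> \<epsilon>)) = 3 \<and>
              3 \<le> b * real d powr c * \<epsilon> powr (-c) / 4 \<and>
              real (Max (set (nn_dims (\<Phi> \<epsilon>)))) \<le> b * \<epsilon> powr (-2) / 4 \<and>
              \<bar>F \<epsilon> w1 - F \<epsilon> w2\<bar>\<^sup>2 \<le> c * \<bar>w1 - w2\<bar>\<^sup>2 \<and>
              \<bar>f w1 - F \<epsilon> w1\<bar>\<^sup>2 \<le> \<epsilon> * (1 + \<bar>w1\<bar> ^ 4) \<and>
              T ^ 3 * \<bar>F \<epsilon> 0\<bar> \<le> c * real d powr c)"
proof -
  define L where "L = sqrt c"
  have L: "0 < L" using c by (simp add: L_def)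
  have lip: "\<bar>f u - f v\<bar> \<le> L * \<bar>u - v\<bar>" for u v
    using A3_f[of u v] abs_le_sqrt_mult_iff[of c] c by (simp add: L_def)
  have b: "64 * (1 + 2 * L) \<le> b"
    unfolding b_def L_def using c by (intro size_constant_ge) simp
  have lip_sq: "\<bar>relu_approx f L \<epsilon> w1 - relu_approx f L \<epsilon> w2\<bar>\<^sup>2 \<le> c * \<bar>w1 - w2\<bar>\<^sup>2" if "0 < \<epsilon>" for \<epsilon> w1 w2
    using relu_approx_lipschitz[OF lip L that, of w1 w2] abs_le_sqrt_mult_iff[of c] c by (simp add: L_def)
  have width: "real (Max (set (nn_dims (relu_approx_net f L \<epsilon>)))) \<le> b * \<epsilon> powr (-2) / 4"
    if "0 < \<epsilon>" "\<epsilon> < 1" for \<epsilon>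
  proof -
    have "real (Max (set (nn_dims (relu_approx_net f L \<epsilon>)))) \<le> 16 * (1 + 2 * L) * \<epsilon> powr (-2)"
      by (rule relu_approx_net_width[OF L that])
    also have "\<dots> \<le> b / 4 * \<epsilon> powr (-2)" using b by (intro mult_right_mono) simp_all
    finally show ?thesis by simp
  qed
  have f0: "T ^ 3 * \<bar>f 0\<bar> \<le> c * real d powr c" if "1 \<le> d" for d
  proof -
    have "T ^ 3 * (\<bar>f 0\<bar> + 1)\<^sup>2 + T * \<bar>g d vzero\<bar>\<^sup>2 \<le> c * real d powr c"
      using c by (intro ennreal_le_of_add_le[OF A3_0[OF that]]) simp
    moreover have "T ^ 3 * \<bar>f 0\<bar> \<le> T ^ 3 * (\<bar>f 0\<bar> + 1)\<^sup>2"
      using T by (intro mult_left_mono) (simp_all add: power2_eq_square algebra_simps)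
    moreover have "0 \<le> T * \<bar>g d vzero\<bar>\<^sup>2" using T by simp
    ultimately show ?thesis by linarith
  qed
  show ?thesis
    using L b c f0 width lip_sq three_le_size_bound[of b] relu_approx_error[OF lip L] relu_approx_0[OF L]
    by (intro exI[of _ "relu_approx f L"] exI[of _ "relu_approx_net f L"])
      (auto simp: continuous_relu_approx nn_valid_relu_approx_net relu_approx_net_realizes nn_dims_relu_approx_net)
qed

end
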